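(* Let $D$ be a distribution over $\mathcal{X}\times\mathcal{Y}$, $\mathcal{X}\subset\mathbb{R}^d$, $\mathcal{Y}=\{1,\dots,c\}$, that is $k$-separable with $\delta$-margin. Then there is a 2-layer network $g:\mathcal{X}\to\mathbb{R}^c$ of the form $g(x)=W^T\big(\rho(u^Tx-\beta_1),\dots,\rho(u^Tx-\beta_k)\big)^T$ with $u\in\mathbb{R}^d$, $\beta_1,\dots,\beta_k\in\mathbb{R}$, $W\in\mathbb{R}^{k\times c}$ (hence $d+(c+1)k$ parameters) that classifies perfectly: with probability $1$ over $(x,y)\sim D$, the index $y$ is the unique maximizer of $j\mapsto g_j(x)$ over $j\in\{1,\dots,c\}$.
   Context: $\rho(t)=1/(1+e^{-t})$ is the sigmoid function. Definition ($k$-separable with $\delta$-margin): Let $\mathcal{X}\subset\mathbb{R}^d$ and $\mathcal{Y}=\{1,\dots,c\}$. A distribution $D$ over $\mathcal{X}\times\mathcal{Y}$ is $k$-separable with $\delta$-margin ($\delta>0$) if there exist a projection vector $a\in\mathbb{R}^d$ with $\|a\|_2=1$ and constants $b_1<b_2<\cdots<b_{k+1}$ such that, setting $\mathcal{X}_i=\{x\in\mathcal{X}: b_i+\delta<a^Tx<b_{i+1}-\delta\}$ for $i\in\{1,\dots,k\}$: (i) for each $i$ there is $y_i\in\mathcal{Y}$ with $\mathbb{P}_{(x,y)\sim D}(y=y_i\mid x\in\mathcal{X}_i)=1$; (ii) $\mathbb{P}_{(x,y)\sim D}\big(x\in\bigcup_{i=1}^k\mathcal{X}_i\big)=1$. 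*)

theory Defs
  imports "HOL-Probability.Probability"
begin

definition sigmoid :: "real \<Rightarrow> real" where
  "sigmoid t = 1 / (1 + exp (- t))"

definition slab :: "(real^'d) set \<Rightarrow> real^'d \<Rightarrow> (nat \<Rightarrow> real) \<Rightarrow> real \<Rightarrow> nat \<Rightarrow> (real^'d) set" where
  "slab X a b \<delta> i = {x \<in> X. b i + \<delta> < a \<bullet> x \<and> a \<bullet> x < b (Suc i) - \<delta>}"

definition k_separable_margin ::
  "((real^'d) \<times> nat) measure \<Rightarrow> (real^'d) set \<Rightarrow> nat \<Rightarrow> nat \<Rightarrow> real \<Rightarrow> bool" where
  "k_separable_margin D X c k \<delta> \<longleftrightarrow> \<delta> > 0 \<and>
     (\<exists>(a::real^'d) (b::nat \<Rightarrow> real).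
        norm a = 1 \<and> strict_mono_on {1..k+1} b \<and>
        (\<forall>i\<in>{1..k}. \<exists>yi\<in>{1..c}.
            AE z in D. fst z \<in> slab X a b \<delta> i \<longrightarrow> snd z = yi) \<and>
        (AE z in D. fst z \<in> (\<Union>i\<in>{1..k}. slab X a b \<delta> i)))"

end

theory Submission
  imports Defs
begin

text \<open>Scale the separating direction by \<open>M = 2/\<delta>\<close> and put the biases at \<open>M b\<^sub>i\<close>: on the
  slab \<open>X\<^sub>m\<close> the hidden activations \<open>f\<^sub>i = \<rho>(M (a\<cdot>x - b\<^sub>i))\<close> decrease in \<open>i\<close>, are at least
  \<open>3/4\<close> for \<open>i \<le> m\<close> and at most \<open>1/4\<close> for \<open>i > m\<close>. With output weights
  \<open>W\<^sub>i\<^sub>j = [y\<^sub>i = j] - [y\<^sub>i\<^sub>-\<^sub>1 = j]\<close> the output \<open>g\<^sub>j\<close> telescopes to the sum of the gaps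
  \<open>f\<^sub>i - f\<^sub>i\<^sub>+\<^sub>1\<close> (with \<open>f\<^sub>k\<^sub>+\<^sub>1 = 0\<close>) over the slabs labelled \<open>j\<close>. The gaps are nonnegative
  and sum to \<open>f\<^sub>1 < 1\<close>, while the gap at \<open>m\<close> is at least \<open>1/2\<close>, so the label \<open>y\<^sub>m\<close> wins.\<close>

lemma sum_if_class_lt_majority:
  fixes e :: "'i \<Rightarrow> real"
  assumes "finite I" "m \<in> I" "\<And>i. i \<in> I \<Longrightarrow> 0 \<le> e i" "sum e I < 2 * e m" "j \<noteq> y m"
  shows "(\<Sum>i\<in>I. if y i = j then e i else 0) < (\<Sum>i\<in>I. if y i = y m then e i else 0)"
proof -
  have "(\<Sum>i\<in>I. if y i = j then e i else 0) = (\<Sum>i\<in>I - {m}. if y i = j then e i else 0)"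
    using sum.remove[OF assms(1,2), of "\<lambda>i. if y i = j then e i else 0"] assms(5) by simp
  also have "\<dots> \<le> sum e (I - {m})"
    by (rule sum_mono) (use assms(3) in auto)
  also have "\<dots> = sum e I - e m"
    using sum.remove[OF assms(1,2), of e] by simp
  also have "\<dots> < e m"
    using assms(4) by simp
  also have "\<dots> \<le> e m + (\<Sum>i\<in>I - {m}. if y i = y m then e i else 0)"
    using assms(3) by (intro add_increasing2 sum_nonneg) auto
  also have "\<dots> = (\<Sum>i\<in>I. if y i = y m then e i else 0)"
    using sum.remove[OF assms(1,2), of "\<lambda>i. if y i = y m then e i else 0"] by simp
  finally show ?thesis .
qed

definition telescoping_weight :: "(nat \<Rightarrow> nat) \<Rightarrow> nat \<Rightarrow> nat \<Rightarrow> real" where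
  "telescoping_weight y i j = (if y i = j then 1 else 0) - (if 2 \<le> i \<and> y (i - 1) = j then 1 else 0)"

definition forward_diff :: "nat \<Rightarrow> (nat \<Rightarrow> real) \<Rightarrow> nat \<Rightarrow> real" where
  "forward_diff n f i = f i - (if i < n then f (Suc i) else 0)"

lemma sum_forward_diff_Suc:
  assumes "1 \<le> n" "P n"
  shows "(\<Sum>i=1..n. if P i then forward_diff (Suc n) f i else 0)
       = (\<Sum>i=1..n. if P i then forward_diff n f i else 0) - f (Suc n)"
proof -
  have "(\<Sum>i=1..n. if P i then forward_diff (Suc n) f i else 0)
      = (\<Sum>i=1..n. (if P i then forward_diff n f i else 0) - (if i = n then f (Suc n) else 0))"
    by (rule sum.cong) (auto simp: forward_diff_def assms(2))
  also have "\<dots> = (\<Sum>i=1..n. if P i then forward_diff n f i else 0) - f (Suc n)"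
    using assms(1) by (simp add: sum_subtractf)
  finally show ?thesis .
qed

lemma sum_telescoping_weight:
  "(\<Sum>i=1..n. telescoping_weight y i j * f i) = (\<Sum>i=1..n. if y i = j then forward_diff n f i else 0)"
proof (induction n)
  case 0
  then show ?case by simp
next
  case (Suc n)
  have "(\<Sum>i=1..n. if y i = j then forward_diff (Suc n) f i else 0)
      = (\<Sum>i=1..n. if y i = j then forward_diff n f i else 0)
        - (if 1 \<le> n \<and> y n = j then f (Suc n) else 0)"
  proof (cases "1 \<le> n \<and> y n = j")
    case True
    then show ?thesis using sum_forward_diff_Suc[of n "\<lambda>i. y i = j"] by simp
  next
    case False
    then show ?thesis by (auto intro!: sum.cong simp: forward_diff_def)
  qed
  then show ?case
    using Suc by (auto simp: telescoping_weight_def forward_diff_def algebra_simps)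
qed

lemma sum_forward_diff: "1 \<le> n \<Longrightarrow> (\<Sum>i=1..n. forward_diff n f i) = f 1"
proof (induction n rule: dec_induct)
  case base
  then show ?case by (simp add: forward_diff_def)
next
  case (step n)
  then show ?case
    using sum_forward_diff_Suc[of n "\<lambda>_. True" f] by (simp add: forward_diff_def)
qed

lemma telescoping_weight_argmax:
  fixes f :: "nat \<Rightarrow> real"
  assumes m: "m \<in> {1..k}"
    and f_bounds: "\<And>i. 0 < f i \<and> f i < 1"
    and f_antimono: "\<And>i. i \<in> {1..<k} \<Longrightarrow> f (Suc i) \<le> f i"
    and f_m: "3/4 \<le> f m" and f_Suc_m: "m < k \<Longrightarrow> f (Suc m) \<le> 1/4"
    and j: "j \<noteq> y m"
  shows "(\<Sum>i=1..k. telescoping_weight y i j * f i) < (\<Sum>i=1..k. telescoping_weight y i (y m) * f i)"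
  unfolding sum_telescoping_weight
proof (rule sum_if_class_lt_majority[where e = "forward_diff k f" and y = y, OF _ m _ _ j])
  show "0 \<le> forward_diff k f i" if "i \<in> {1..k}" for i
    using that f_antimono f_bounds by (auto simp: forward_diff_def less_imp_le)
  have "sum (forward_diff k f) {1..k} = f 1"
    using m by (intro sum_forward_diff) simp
  also have "\<dots> < 2 * forward_diff k f m"
    using f_bounds[of 1] f_m f_Suc_m by (auto simp: forward_diff_def)
  finally show "sum (forward_diff k f) {1..k} < 2 * forward_diff k f m" .
qed simp

lemma sigmoid_bounds: "0 < sigmoid t" "sigmoid t < 1"
  by (auto simp: sigmoid_def add_pos_pos)

lemma sigmoid_mono: "s \<le> t \<Longrightarrow> sigmoid s \<le> sigmoid t"
  unfolding sigmoid_def by (auto intro!: divide_left_mono mult_pos_pos add_pos_pos)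

lemma sigmoid_minus: "sigmoid (- t) = 1 - sigmoid t"
proof -
  have "0 < 1 + exp t"
    by (simp add: add_pos_pos)
  then have "1 / (1 + exp t) = 1 - 1 / (1 + exp (- t))"
    by (simp add: exp_minus divide_simps)
  then show ?thesis by (simp add: sigmoid_def)
qed

lemma sigmoid_ge_three_quarters: "2 \<le> t \<Longrightarrow> 3/4 \<le> sigmoid t"
proof -
  assume "2 \<le> t"
  have "3 \<le> exp (2::real)"
    using exp_ge_add_one_self[of 2] by simp
  then have "exp (-2::real) \<le> 1/3"
    by (simp add: exp_minus field_simps)
  then have "3/4 \<le> sigmoid 2"
    by (simp add: sigmoid_def field_simps add_pos_pos)
  with \<open>2 \<le> t\<close> show ?thesis
    using sigmoid_mono by fastforce
qed

lemma sigmoid_le_one_quarter: "t \<le> -2 \<Longrightarrow> sigmoid t \<le> 1/4"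
  using sigmoid_ge_three_quarters[of "- t"] sigmoid_minus[of "- t"] by simp

lemma staircase_network_classifies:
  fixes b :: "nat \<Rightarrow> real" and t M \<delta> :: real
  assumes b: "strict_mono_on {1..k+1} b" and m: "m \<in> {1..k}"
    and t: "b m + \<delta> < t" "t < b (Suc m) - \<delta>"
    and M: "0 < M" "2 \<le> M * \<delta>"
    and j: "j \<noteq> y m"
  shows "(\<Sum>i=1..k. telescoping_weight y i j * sigmoid (M * (t - b i)))
       < (\<Sum>i=1..k. telescoping_weight y i (y m) * sigmoid (M * (t - b i)))"
proof (rule telescoping_weight_argmax[where y = y and f = "\<lambda>i. sigmoid (M * (t - b i))", OF m _ _ _ _ j])
  show "0 < sigmoid (M * (t - b i)) \<and> sigmoid (M * (t - b i)) < 1" for i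
    by (simp add: sigmoid_bounds)
  show "sigmoid (M * (t - b (Suc i))) \<le> sigmoid (M * (t - b i))" if "i \<in> {1..<k}" for i
  proof -
    have "b i < b (Suc i)"
      using that by (intro strict_mono_onD[OF b]) auto
    then show ?thesis
      using M(1) by (intro sigmoid_mono mult_left_mono) auto
  qed
  have "M * \<delta> \<le> M * (t - b m)"
    using t(1) M(1) by (intro mult_left_mono) auto
  then show "3/4 \<le> sigmoid (M * (t - b m))"
    using M(2) by (intro sigmoid_ge_three_quarters) simp
  have "M * \<delta> \<le> M * (b (Suc m) - t)"
    using t(2) M(1) by (intro mult_left_mono) auto
  then show "sigmoid (M * (t - b (Suc m))) \<le> 1/4"
    using M(2) by (intro sigmoid_le_one_quarter) (simp add: algebra_simps)
qed

lemma k_separable_marginE: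
  assumes "k_separable_margin D X c k \<delta>"
  obtains a b y where "0 < \<delta>" "strict_mono_on {1..k+1} b" "\<And>i. i \<in> {1..k} \<Longrightarrow> y i \<in> {1..c}"
    "AE z in D. \<exists>i\<in>{1..k}. fst z \<in> slab X a b \<delta> i \<and> snd z = y i"
proof -
  have "0 < \<delta>"
    using assms by (simp add: k_separable_margin_def)
  obtain a b where b: "strict_mono_on {1..k+1} b"
    and labelled: "\<forall>i\<in>{1..k}. \<exists>yi\<in>{1..c}. AE z in D. fst z \<in> slab X a b \<delta> i \<longrightarrow> snd z = yi"
    and covered: "AE z in D. fst z \<in> (\<Union>i\<in>{1..k}. slab X a b \<delta> i)"
    using assms unfolding k_separable_margin_def by auto
  obtain y where y: "\<And>i. i \<in> {1..k} \<Longrightarrow> y i \<in> {1..c}"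
    and y_AE: "\<And>i. i \<in> {1..k} \<Longrightarrow> AE z in D. fst z \<in> slab X a b \<delta> i \<longrightarrow> snd z = y i"
    using bchoice[OF labelled[unfolded Bex_def]] by blast
  have "AE z in D. \<forall>i\<in>{1..k}. fst z \<in> slab X a b \<delta> i \<longrightarrow> snd z = y i"
    using y_AE by (subst AE_finite_all) auto
  with covered have "AE z in D. \<exists>i\<in>{1..k}. fst z \<in> slab X a b \<delta> i \<and> snd z = y i"
    by eventually_elim blast
  from \<open>0 < \<delta>\<close> b y this show ?thesis
    by (rule that)
qed

theorem corollary1:
  fixes D :: "((real^'d) \<times> nat) measure"
    and X :: "(real^'d) set" and c k :: nat and \<delta> :: real
  assumes "prob_space D"
    and "space D = X \<times> {1..c}"
    and "k_separable_margin D X c k \<delta>"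
  shows "\<exists>(u::real^'d) (\<beta>::nat \<Rightarrow> real) (W::nat \<Rightarrow> nat \<Rightarrow> real).
           AE z in D.
             (let g = (\<lambda>j. \<Sum>i=1..k. W i j * sigmoid (u \<bullet> fst z - \<beta> i))
              in snd z \<in> {1..c} \<and> (\<forall>j\<in>{1..c}. j \<noteq> snd z \<longrightarrow> g j < g (snd z)))"
proof -
  obtain a b y where "0 < \<delta>" and b: "strict_mono_on {1..k+1} b"
    and y: "\<And>i. i \<in> {1..k} \<Longrightarrow> y i \<in> {1..c}"
    and AE_slab: "AE z in D. \<exists>i\<in>{1..k}. fst z \<in> slab X a b \<delta> i \<and> snd z = y i"
    using assms(3) by (elim k_separable_marginE) blast
  define M where "M = 2 / \<delta>"
  have M: "0 < M" "2 \<le> M * \<delta>"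
    using \<open>0 < \<delta>\<close> by (simp_all add: M_def)
  have scaled: "(M *\<^sub>R a) \<bullet> x - M * b i = M * (a \<bullet> x - b i)" for x i
    by (simp add: algebra_simps)
  show ?thesis
  proof (intro exI)
    show "AE z in D. (let g = (\<lambda>j. \<Sum>i=1..k. telescoping_weight y i j
                                  * sigmoid ((M *\<^sub>R a) \<bullet> fst z - M * b i))
                in snd z \<in> {1..c} \<and> (\<forall>j\<in>{1..c}. j \<noteq> snd z \<longrightarrow> g j < g (snd z)))"
      using AE_slab
    proof eventually_elim
      case (elim z)
      then obtain m where m: "m \<in> {1..k}" and "fst z \<in> slab X a b \<delta> m" and "snd z = y m"
        by blast
      then have "b m + \<delta> < a \<bullet> fst z" "a \<bullet> fst z < b (Suc m) - \<delta>"
        by (auto simp: slab_def)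
      note wins = staircase_network_classifies[OF b m this M]
      show ?case
        unfolding Let_def scaled \<open>snd z = y m\<close> using y[OF m] wins by blast
    qed
  qed
qed

end
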